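(* Let $(X,d_X)$ be a finite metric space and let $\mathcal{C}(X)$ and $\mathcal{D}(X)$ be two partitions of $X$ such that every set in $\mathcal{C}(X)$ and every set in $\mathcal{D}(X)$ has diameter at most $\delta$. Fix one of the following inter-cluster distances $d_{\mathcal{C}}$ on pairs of nonempty subsets $A,B\subseteq X$: $\max(A,B)=\max_{x\in A,y\in B} d_X(x,y)$, $\ \min(A,B)=\min_{x\in A,y\in B} d_X(x,y)$, or $\ \operatorname{avg}(A,B)=\frac{1}{|A||B|}\sum_{x\in A}\sum_{y\in B} d_X(x,y)$. Let $G_{\mathcal{C}(X)}$ and $G_{\mathcal{D}(X)}$ be the ClusterGraphs of $\mathcal{C}(X)$ and $\mathcal{D}(X)$ with respect to $d_{\mathcal{C}}$. Then for every vertex $u$ of $G_{\mathcal{C}(X)}$ (corresponding to the cluster $C_u\in\mathcal{C}(X)$), the image $\operatorname{im}(u)$ of $u$ in $G_{\mathcal{D}(X)}$ spans a clique in $G_{\mathcal{D}(X)}$, and the diameter of this clique, i.e. $\max\{ d_{\mathcal{C}}(D_i,D_j) : D_i, D_j \in \operatorname{im}(u),\ D_i\neq D_j\}$, is at most $3\delta$ when $d_{\mathcal{C}}$ is the maximum or the average distance, and at most $\delta$ when $d_{\mathcal{C}}$ is the minimum distance.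
   Context: A partition of $X$ is a collection of pairwise disjoint subsets (clusters) whose union is $X$; the diameter of a subset $S$ is $\max_{x,y\in S}d_X(x,y)$. The ClusterGraph of a partition $\mathcal{P}(X)$ with respect to an inter-cluster distance $d_{\mathcal{C}}$ is the complete graph whose vertices are the clusters of $\mathcal{P}(X)$, with the edge between clusters $P_i,P_j$ weighted by $d_{\mathcal{C}}(P_i,P_j)$. The image of a vertex $u$ of $G_{\mathcal{C}(X)}$ (cluster $C_u$) in $G_{\mathcal{D}(X)}$ is the set of vertices of $G_{\mathcal{D}(X)}$ whose clusters $D_j\in\mathcal{D}(X)$ satisfy $D_j\cap C_u\neq\emptyset$. The diameter of a set of vertices in such a weighted graph is the greatest edge weight between any two of its vertices. *)

theory Defs
  imports Complex_Main "HOL-Library.Disjoint_Sets"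
begin

definition finite_metric_space :: "'a set \<Rightarrow> ('a \<Rightarrow> 'a \<Rightarrow> real) \<Rightarrow> bool" where
  "finite_metric_space X d \<longleftrightarrow> finite X \<and>
     (\<forall>x\<in>X. \<forall>y\<in>X. d x y \<ge> 0 \<and> (d x y = 0 \<longleftrightarrow> x = y) \<and> d x y = d y x) \<and>
     (\<forall>x\<in>X. \<forall>y\<in>X. \<forall>z\<in>X. d x z \<le> d x y + d y z)"

definition is_partition :: "'a set \<Rightarrow> 'a set set \<Rightarrow> bool" where
  "is_partition X P \<longleftrightarrow> \<Union>P = X \<and> disjoint P \<and> (\<forall>S\<in>P. S \<noteq> {})"

definition set_diam :: "('a \<Rightarrow> 'a \<Rightarrow> real) \<Rightarrow> 'a set \<Rightarrow> real" where
  "set_diam d S = Max {d x y | x y. x \<in> S \<and> y \<in> S}"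

datatype linkage = MaxLink | MinLink | AvgLink

definition inter_dist :: "linkage \<Rightarrow> ('a \<Rightarrow> 'a \<Rightarrow> real) \<Rightarrow> 'a set \<Rightarrow> 'a set \<Rightarrow> real" where
  "inter_dist L d A B = (case L of
      MaxLink \<Rightarrow> Max {d x y | x y. x \<in> A \<and> y \<in> B}
    | MinLink \<Rightarrow> Min {d x y | x y. x \<in> A \<and> y \<in> B}
    | AvgLink \<Rightarrow> (\<Sum>x\<in>A. \<Sum>y\<in>B. d x y) / (real (card A) * real (card B)))"

text \<open>ClusterGraph: complete graph on the clusters, with edge weights given by the
  inter-cluster distance. Represented by its vertex set, edge relation and weight.\<close>
definition cg_vertices :: "'a set set \<Rightarrow> 'a set set" where
  "cg_vertices P = P"

definition cg_edge :: "'a set set \<Rightarrow> 'a set \<Rightarrow> 'a set \<Rightarrow> bool" where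
  "cg_edge P A B \<longleftrightarrow> A \<in> P \<and> B \<in> P \<and> A \<noteq> B"

definition cg_weight :: "linkage \<Rightarrow> ('a \<Rightarrow> 'a \<Rightarrow> real) \<Rightarrow> 'a set set \<Rightarrow> 'a set \<Rightarrow> 'a set \<Rightarrow> real" where
  "cg_weight L d P A B = inter_dist L d A B"

definition is_clique :: "'a set set \<Rightarrow> 'a set set \<Rightarrow> bool" where
  "is_clique P K \<longleftrightarrow> K \<subseteq> cg_vertices P \<and> (\<forall>A\<in>K. \<forall>B\<in>K. A \<noteq> B \<longrightarrow> cg_edge P A B)"

definition image_in :: "'a set set \<Rightarrow> 'a set \<Rightarrow> 'a set set" where
  "image_in D C = {Dj \<in> D. Dj \<inter> C \<noteq> {}}"

end

theory Submission
  imports Defs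
begin

text \<open>If two clusters \<open>D\<^sub>i\<close>, \<open>D\<^sub>j\<close> of \<open>\<D>\<close> meet the cluster \<open>C\<^sub>u\<close> in points \<open>a\<close> and \<open>b\<close>, then
  every \<open>x \<in> D\<^sub>i\<close>, \<open>y \<in> D\<^sub>j\<close> satisfy \<open>d x y \<le> d x a + d a b + d b y \<le> 3\<delta>\<close>, which bounds the maximum
  and the average linkage. The minimum linkage is at most \<open>d a b \<le> \<delta>\<close>.\<close>

lemma finite_dist_set:
  assumes "finite A" "finite B"
  shows "finite {d x y | x y. x \<in> A \<and> y \<in> B}"
proof -
  have "{d x y | x y. x \<in> A \<and> y \<in> B} = case_prod d ` (A \<times> B)" by auto
  then show ?thesis using assms by simp
qed

lemma dist_le_set_diam:
  assumes "finite S" "x \<in> S" "y \<in> S"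
  shows "d x y \<le> set_diam d S"
  unfolding set_diam_def using assms by (intro Max_ge finite_dist_set) auto

lemma partition_memberD:
  assumes "is_partition X P" "finite X" "S \<in> P"
  shows "S \<subseteq> X" "finite S" "S \<noteq> {}"
proof -
  show "S \<subseteq> X" "S \<noteq> {}" using assms unfolding is_partition_def by auto
  show "finite S" using \<open>S \<subseteq> X\<close> assms(2) by (rule finite_subset)
qed

lemma is_clique_image_in: "is_clique P (image_in P C)"
  unfolding is_clique_def cg_vertices_def cg_edge_def image_in_def by auto

lemma inter_dist_MinLink_le:
  assumes "finite A" "finite B" "x \<in> A" "y \<in> B"
  shows "inter_dist MinLink d A B \<le> d x y"
  unfolding inter_dist_def using assms by (auto intro: Min_le finite_dist_set)

lemma inter_dist_le_if_dist_le:
  assumes "finite A" "finite B" "A \<noteq> {}" "B \<noteq> {}"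
    and bound: "\<forall>x\<in>A. \<forall>y\<in>B. d x y \<le> c"
  shows "inter_dist L d A B \<le> c"
proof (cases L)
  case MaxLink
  have "{d x y | x y. x \<in> A \<and> y \<in> B} \<noteq> {}" using assms(3,4) by blast
  then show ?thesis
    unfolding inter_dist_def using MaxLink bound
    by (auto intro!: Max.boundedI finite_dist_set assms(1,2))
next
  case MinLink
  obtain p q where "p \<in> A" "q \<in> B" using assms(3,4) by blast
  then have "inter_dist MinLink d A B \<le> d p q"
    using assms(1,2) by (intro inter_dist_MinLink_le)
  also have "\<dots> \<le> c" using bound \<open>p \<in> A\<close> \<open>q \<in> B\<close> by blast
  finally show ?thesis using MinLink by simp
next
  case AvgLink
  have "(\<Sum>x\<in>A. \<Sum>y\<in>B. d x y) \<le> real (card A) * (real (card B) * c)"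
    using bound by (intro sum_bounded_above) (simp add: sum_bounded_above)
  moreover have "real (card A) * real (card B) > 0"
    using assms(1-4) by (simp add: card_gt_0_iff)
  ultimately show ?thesis
    unfolding inter_dist_def using AvgLink by (simp add: pos_divide_le_eq mult_ac)
qed

lemma dist_le_three_diam_through_overlaps:
  assumes "finite_metric_space X d" "A \<subseteq> X" "B \<subseteq> X" "C \<subseteq> X"
    and "set_diam d A \<le> \<delta>" "set_diam d B \<le> \<delta>" "set_diam d C \<le> \<delta>"
    and "a \<in> A \<inter> C" "b \<in> B \<inter> C" "x \<in> A" "y \<in> B"
  shows "d x y \<le> 3 * \<delta>"
proof -
  have fin: "finite A" "finite B" "finite C"
    using assms(1-4) finite_subset unfolding finite_metric_space_def by auto
  have tri: "d p r \<le> d p q + d q r" if "p \<in> X" "q \<in> X" "r \<in> X" for p q r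
    using assms(1) that unfolding finite_metric_space_def by blast
  have "d x y \<le> d x a + d a b + d b y"
    using tri[of x a y] tri[of a b y] assms(2-4,8-11) by fastforce
  also have "\<dots> \<le> 3 * \<delta>"
    using dist_le_set_diam[of A x a d] dist_le_set_diam[of C a b d] dist_le_set_diam[of B b y d]
      fin assms(5-11) by auto
  finally show ?thesis .
qed

theorem proposition2:
  fixes X :: "'a set" and d :: "'a \<Rightarrow> 'a \<Rightarrow> real" and \<C> \<D> :: "'a set set"
    and \<delta> :: real and L :: linkage
  assumes "finite_metric_space X d"
    and "is_partition X \<C>" and "is_partition X \<D>"
    and "\<forall>S\<in>\<C>. set_diam d S \<le> \<delta>" and "\<forall>S\<in>\<D>. set_diam d S \<le> \<delta>"
    and "u \<in> cg_vertices \<C>"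
  shows "is_clique \<D> (image_in \<D> u) \<and>
    (\<forall>Di\<in>image_in \<D> u. \<forall>Dj\<in>image_in \<D> u. Di \<noteq> Dj \<longrightarrow>
        cg_weight L d \<D> Di Dj \<le> (if L = MinLink then \<delta> else 3 * \<delta>))"
proof -
  have "finite X" using assms(1) unfolding finite_metric_space_def by simp
  note \<C>_member = partition_memberD[OF assms(2) this] and \<D>_member = partition_memberD[OF assms(3) this]
  have u: "u \<in> \<C>" using assms(6) unfolding cg_vertices_def .
  have "inter_dist L d Di Dj \<le> (if L = MinLink then \<delta> else 3 * \<delta>)"
    if images: "Di \<in> image_in \<D> u" "Dj \<in> image_in \<D> u" for Di Dj
  proof -
    obtain a b where Di: "Di \<in> \<D>" "a \<in> Di \<inter> u" and Dj: "Dj \<in> \<D>" "b \<in> Dj \<inter> u"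
      using images unfolding image_in_def by blast
    show ?thesis
    proof (cases "L = MinLink")
      case True
      have "d a b \<le> \<delta>"
        using dist_le_set_diam[of u a b d] \<C>_member(2)[OF u] u Di(2) Dj(2) assms(4) by fastforce
      then show ?thesis
        using True inter_dist_MinLink_le[of Di Dj a b d] \<D>_member(2) Di Dj by fastforce
    next
      case False
      have "\<forall>x\<in>Di. \<forall>y\<in>Dj. d x y \<le> 3 * \<delta>"
        using dist_le_three_diam_through_overlaps[OF assms(1) \<D>_member(1)[OF Di(1)]
            \<D>_member(1)[OF Dj(1)] \<C>_member(1)[OF u]] Di Dj u assms(4,5) by blast
      then show ?thesis
        using False inter_dist_le_if_dist_le[OF \<D>_member(2)[OF Di(1)] \<D>_member(2)[OF Dj(1)]
            \<D>_member(3)[OF Di(1)] \<D>_member(3)[OF Dj(1)]] by simp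
    qed
  qed
  then show ?thesis using is_clique_image_in unfolding cg_weight_def by blast
qed

end
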